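(* Fix $0<r_1,r_2\le 1$ and $n\ge 1$. Consider a cycle $A\to B^1\to B^2\to\cdots\to B^n\to A$ of $n+1$ distinct pools with positive reserves: pool $1$ is $A\rightleftharpoons B^1$ with reserves $a_1$ of $A$ and $b^1_1$ of $B^1$; for $2\le k\le n$, pool $k$ is $B^{k-1}\rightleftharpoons B^k$ with reserves $b^{k-1}_k$ of $B^{k-1}$ and $b^k_k$ of $B^k$; pool $n+1$ is $B^n\rightleftharpoons A$ with reserves $b^n_{n+1}$ of $B^n$ and $a_{n+1}$ of $A$. Define the arbitrage index $$I=\frac{a_{n+1}\, b^1_1\, b^2_2\cdots b^n_n}{a_1\, b^1_2\, b^2_3\cdots b^n_{n+1}}.$$ For $\delta\ge 0$ let $U_{\rightarrow}(\delta)$ be the net gain (amount of $A$ received minus $\delta$) from swapping $\delta$ of $A$ sequentially through the pools in the order $A\to B^1\to\cdots\to B^n\to A$, and $U_{\leftarrow}(\delta)$ the net gain from swapping $\delta$ of $A$ through the same pools in the reversed order $A\to B^n\to\cdots\to B^1\to A$. If $I>\dfrac{1}{r_1^{n+1}r_2^{n+1}}$, then there exists $\delta>0$ with $U_{\rightarrow}(\delta)>0$, and $U_{\leftarrow}(\delta)<0$ for every $\delta>0$.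
   Context: Constant-product automated market maker with fees (Uniswap V2 model). A pool between tokens $X$ and $Y$ holds reserves $x>0$ of $X$ and $y>0$ of $Y$. Swapping an input amount $\delta\ge 0$ of $X$ into the pool returns $\mathrm{out}_{x,y}(\delta)=\dfrac{r_1 r_2\, y\,\delta}{x+r_1\delta}$ of $Y$ (and swapping in $Y$ is symmetric with the roles of $x,y$ exchanged), where $r_1,r_2\in(0,1]$ are fixed fee parameters (Uniswap V2: $r_1=0.997$, $r_2=1$). In a sequential (cyclic) trade, the entire output of each swap is the input of the next swap, and each pool is used once with its initial reserves. *)

theory Defs
  imports Complex_Main
begin

text \<open>Constant-product swap: input d of the token with reserve x into a pool with
  reserves x and y returns r1 r2 y d / (x + r1 d) of the other token.\<close>
definition swap_out :: "real \<Rightarrow> real \<Rightarrow> real \<Rightarrow> real \<Rightarrow> real \<Rightarrow> real" where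
  "swap_out r1 r2 x y d = r1 * r2 * y * d / (x + r1 * d)"

text \<open>Cycle of n+1 pools, indexed k = 1..n+1.  Pool k holds reserve L k of the token
  entering it in the forward direction A -> B^1 -> ... -> B^n -> A and reserve R k of the
  token leaving it.  So L 1 = a_1, R 1 = b^1_1; L k = b^(k-1)_k, R k = b^k_k (2 <= k <= n);
  L (n+1) = b^n_(n+1), R (n+1) = a_(n+1).\<close>

definition arb_index :: "nat \<Rightarrow> (nat \<Rightarrow> real) \<Rightarrow> (nat \<Rightarrow> real) \<Rightarrow> real" where
  "arb_index n L R = (\<Prod>k=1..n+1. R k) / (\<Prod>k=1..n+1. L k)"

definition U_fwd :: "real \<Rightarrow> real \<Rightarrow> nat \<Rightarrow> (nat \<Rightarrow> real) \<Rightarrow> (nat \<Rightarrow> real) \<Rightarrow> real \<Rightarrow> real" where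
  "U_fwd r1 r2 n L R d =
     fold (\<lambda>k x. swap_out r1 r2 (L k) (R k) x) [1..<n+2] d - d"

definition U_bwd :: "real \<Rightarrow> real \<Rightarrow> nat \<Rightarrow> (nat \<Rightarrow> real) \<Rightarrow> (nat \<Rightarrow> real) \<Rightarrow> real \<Rightarrow> real" where
  "U_bwd r1 r2 n L R d =
     fold (\<lambda>k x. swap_out r1 r2 (R k) (L k) x) (rev [1..<n+2]) d - d"

end

theory Submission
  imports Defs
begin

text \<open>A cycle of constant-product swaps acts on the input as a linear-fractional map
  d \<mapsto> K d / (P + C d) with C \<ge> 0, where P is the product of the input-side reserves and
  K is (r1 r2)^(n+1) times the product of the output-side reserves.  Its slope at 0 is
  K / P, which is (r1 r2)^(n+1) I forward and (r1 r2)^(n+1) / I backward; since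
  C \<ge> 0 the map lies below this tangent.\<close>

lemma swap_out_nonneg:
  assumes "0 < r1" "0 < r2" "0 < x" "0 < y" "0 \<le> d"
  shows "0 \<le> swap_out r1 r2 x y d"
  using assms by (simp add: swap_out_def add_pos_nonneg)

lemma linear_fractional_comp_swap_out:
  fixes K P C :: real
  assumes "x + r1 * d \<noteq> 0"
  shows "K * swap_out r1 r2 x y d / (P + C * swap_out r1 r2 x y d)
       = (K * (r1 * r2 * y)) * d / (P * x + (P * r1 + C * (r1 * r2 * y)) * d)"
proof -
  define p where "p = r1 * r2 * y * d"
  define q where "q = x + r1 * d"
  have "q \<noteq> 0" using assms by (simp add: q_def)
  then have "P + C * (p / q) = (P * q + C * p) / q" by (simp add: field_simps)
  with \<open>q \<noteq> 0\<close> have "K * (p / q) / (P + C * (p / q)) = K * p / (P * q + C * p)"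
    by simp
  then show ?thesis
    by (simp add: swap_out_def p_def q_def algebra_simps)
qed

lemma fold_swap_out_linear_fractional:
  fixes r1 r2 :: real and X Y :: "nat \<Rightarrow> real"
  assumes "0 < r1" "0 < r2" and "\<forall>k\<in>set ks. 0 < X k \<and> 0 < Y k"
  shows "\<exists>C\<ge>0. \<forall>d\<ge>0. fold (\<lambda>k. swap_out r1 r2 (X k) (Y k)) ks d
           = (r1 * r2) ^ length ks * prod_list (map Y ks) * d / (prod_list (map X ks) + C * d)"
  using assms(3)
proof (induction ks)
  case Nil
  show ?case by (intro exI[of _ 0]) simp
next
  case (Cons k ks)
  then obtain C where "C \<ge> 0" and IH: "\<forall>d\<ge>0. fold (\<lambda>k. swap_out r1 r2 (X k) (Y k)) ks d
      = (r1 * r2) ^ length ks * prod_list (map Y ks) * d / (prod_list (map X ks) + C * d)"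
    by auto
  have "0 < X k" "0 < Y k" using Cons.prems by auto
  have "0 < prod_list (map X ks)"
    using Cons.prems by (induction ks) auto
  define C' where "C' = prod_list (map X ks) * r1 + C * (r1 * r2 * Y k)"
  have "0 \<le> C'"
    unfolding C'_def using \<open>C \<ge> 0\<close> \<open>0 < Y k\<close> \<open>0 < prod_list (map X ks)\<close> assms(1,2) by simp
  moreover have "fold (\<lambda>k. swap_out r1 r2 (X k) (Y k)) (k # ks) d
      = (r1 * r2) ^ length (k # ks) * prod_list (map Y (k # ks)) * d
        / (prod_list (map X (k # ks)) + C' * d)" if "0 \<le> d" for d
  proof -
    have "0 \<le> swap_out r1 r2 (X k) (Y k) d"
      using swap_out_nonneg assms(1,2) \<open>0 < X k\<close> \<open>0 < Y k\<close> that by blast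
    with IH have "fold (\<lambda>k. swap_out r1 r2 (X k) (Y k)) (k # ks) d
        = (r1 * r2) ^ length ks * prod_list (map Y ks) * swap_out r1 r2 (X k) (Y k) d
          / (prod_list (map X ks) + C * swap_out r1 r2 (X k) (Y k) d)"
      by simp
    also have "\<dots> = (r1 * r2) ^ length ks * prod_list (map Y ks) * (r1 * r2 * Y k) * d
          / (prod_list (map X ks) * X k + C' * d)"
      unfolding C'_def
    proof (rule linear_fractional_comp_swap_out)
      show "X k + r1 * d \<noteq> 0"
        using \<open>0 < X k\<close> assms(1) that mult_nonneg_nonneg[of r1 d] by linarith
    qed
    finally show ?thesis by (simp add: mult_ac)
  qed
  ultimately show ?case by blast
qed

lemma exists_pos_less_linear_fractional:
  fixes K P C :: real
  assumes "0 < P" "P < K" "0 \<le> C"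
  shows "\<exists>d>0. d < K * d / (P + C * d)"
proof -
  define d where "d = (K - P) / (C + 1)"
  have "0 < d" unfolding d_def using assms by simp
  have "C * d < K - P"
    unfolding d_def using assms by (simp add: field_simps)
  then have "(P + C * d) * d < K * d"
    using \<open>0 < d\<close> by (intro mult_strict_right_mono) auto
  moreover have "0 < P + C * d"
    using assms \<open>0 < d\<close> by (simp add: add_pos_nonneg)
  ultimately have "d < K * d / (P + C * d)"
    by (simp add: pos_less_divide_eq mult.commute)
  with \<open>0 < d\<close> show ?thesis by blast
qed

lemma linear_fractional_less:
  fixes K P C d :: real
  assumes "K < P" "0 < P" "0 \<le> C" "0 < d"
  shows "K * d / (P + C * d) < d"
proof -
  have "0 < P + C * d" using assms by (simp add: add_pos_nonneg)
  moreover have "K * d < (P + C * d) * d"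
  proof (rule mult_strict_right_mono)
    show "K < P + C * d" using assms mult_nonneg_nonneg[of C d] by linarith
  qed (use assms in simp)
  ultimately show ?thesis by (simp add: pos_divide_less_eq mult.commute)
qed

lemma prod_list_map_upt_conv_prod:
  "prod_list (map f [1..<n+2]) = (\<Prod>k=1..n+1. f k)"
proof -
  have "prod_list (map f [1..<n+2]) = prod f (set [1..<n+2])"
    by (rule prod.distinct_set_conv_list[symmetric]) simp
  also have "set [1..<n+2] = {1..n+1}" by auto
  finally show ?thesis .
qed

lemma U_fwd_linear_fractional:
  assumes "0 < r1" "0 < r2" "\<forall>k\<in>{1..n+1}. 0 < L k \<and> 0 < R k"
  shows "\<exists>C\<ge>0. \<forall>d\<ge>0. U_fwd r1 r2 n L R d
           = (r1 * r2) ^ (n+1) * (\<Prod>k=1..n+1. R k) * d / ((\<Prod>k=1..n+1. L k) + C * d) - d"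
proof -
  have "\<forall>k\<in>set [1..<n+2]. 0 < L k \<and> 0 < R k" using assms(3) by auto
  from fold_swap_out_linear_fractional[OF assms(1,2) this]
  show ?thesis unfolding U_fwd_def prod_list_map_upt_conv_prod length_upt by simp
qed

lemma U_bwd_linear_fractional:
  assumes "0 < r1" "0 < r2" "\<forall>k\<in>{1..n+1}. 0 < L k \<and> 0 < R k"
  shows "\<exists>C\<ge>0. \<forall>d\<ge>0. U_bwd r1 r2 n L R d
           = (r1 * r2) ^ (n+1) * (\<Prod>k=1..n+1. L k) * d / ((\<Prod>k=1..n+1. R k) + C * d) - d"
proof -
  have "\<forall>k\<in>set (rev [1..<n+2]). 0 < R k \<and> 0 < L k" using assms(3) by auto
  from fold_swap_out_linear_fractional[OF assms(1,2) this]
  show ?thesis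
    unfolding U_bwd_def rev_map[symmetric] prod_list.rev prod_list_map_upt_conv_prod
      length_rev length_upt
    by simp
qed

theorem lemma1:
  fixes r1 r2 :: real and n :: nat and L R :: "nat \<Rightarrow> real"
  assumes "0 < r1" "r1 \<le> 1" "0 < r2" "r2 \<le> 1"
    and "n \<ge> 1"
    and "\<forall>k\<in>{1..n+1}. 0 < L k \<and> 0 < R k"
    and "arb_index n L R > 1 / (r1 ^ (n+1) * r2 ^ (n+1))"
  shows "(\<exists>\<delta>>0. U_fwd r1 r2 n L R \<delta> > 0) \<and> (\<forall>\<delta>>0. U_bwd r1 r2 n L R \<delta> < 0)"
proof -
  define c where "c = (r1 * r2) ^ (n+1)"
  define PL where "PL = (\<Prod>k=1..n+1. L k)"
  define PR where "PR = (\<Prod>k=1..n+1. R k)"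
  have "0 < PL" "0 < PR" unfolding PL_def PR_def using assms(6) by (intro prod_pos; auto)+
  have "0 < c" "c \<le> 1" unfolding c_def using assms(1-4) by (simp_all add: power_le_one mult_le_one)
  have fwd_slope: "PL < c * PR"
    using assms(7) \<open>0 < PL\<close> \<open>0 < c\<close>
    by (simp add: arb_index_def PL_def PR_def c_def power_mult_distrib field_simps)
  have bwd_slope: "c * PL < PR"
    using fwd_slope \<open>0 < PL\<close> \<open>0 < PR\<close> \<open>0 < c\<close> \<open>c \<le> 1\<close>
      mult_left_le_one_le[of PL c] mult_left_le_one_le[of PR c] by linarith
  obtain C where "C \<ge> 0" and fwd: "\<forall>d\<ge>0. U_fwd r1 r2 n L R d = c * PR * d / (PL + C * d) - d"
    using U_fwd_linear_fractional[OF assms(1,3,6)] unfolding c_def PL_def PR_def by blast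
  obtain C' where "C' \<ge> 0" and bwd: "\<forall>d\<ge>0. U_bwd r1 r2 n L R d = c * PL * d / (PR + C' * d) - d"
    using U_bwd_linear_fractional[OF assms(1,3,6)] unfolding c_def PL_def PR_def by blast
  have "\<exists>\<delta>>0. U_fwd r1 r2 n L R \<delta> > 0"
    using exists_pos_less_linear_fractional[OF \<open>0 < PL\<close> fwd_slope \<open>C \<ge> 0\<close>] fwd by force
  moreover have "\<forall>\<delta>>0. U_bwd r1 r2 n L R \<delta> < 0"
    using linear_fractional_less[OF bwd_slope \<open>0 < PR\<close> \<open>C' \<ge> 0\<close>] bwd by simp
  ultimately show ?thesis ..
qed

end
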